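(* Let $(X_1,Y_1),\dots,(X_{n+m},Y_{n+m})$ be exchangeable random elements of $\mathcal{X}\times\mathcal{Y}$ (indices $1,\dots,n$ calibration, $n+1,\dots,n+m$ test), $f$ a fixed model, $\mathcal{L}(f,x,y)\in[0,1]$ a known risk map, $s:\mathcal{X}\to[0,1]$ a fixed score, and $L_i=\mathcal{L}(f,X_i,Y_i)$. Then for any fixed $\gamma>0$ and every $j\in\{1,\dots,m\}$, the random variable $E_{\gamma,n+j}$ defined below satisfies $E_{\gamma,n+j}\ge0$ and $\mathbb{E}[L_{n+j}E_{\gamma,n+j}]\le1$.
   Context: Let $\mathcal{M}=\{s(X_i)\}_{i=1}^{n+m}$. For $t\in\mathbb{R}$ and $\ell\in[0,1]$ define $$\mathrm{FR}_{n+j}(t;\ell)=\frac{\ell\mathbf{1}\{s(X_{n+j})\le t\}+\sum_{i=1}^nL_i\mathbf{1}\{s(X_i)\le t\}}{1+\sum_{k\ne j,k\le m}\mathbf{1}\{s(X_{n+k})\le t\}}\cdot\frac{m}{n+1},$$ $t_{\gamma,n+j}(\ell)=\max\{t\in\mathcal{M}:\mathrm{FR}_{n+j}(t;\ell)\le\gamma\}$ (with $\max\emptyset=-\infty$), and $$E_{\gamma,n+j}=\inf_{\ell\in[0,1]}\frac{(n+1)\mathbf{1}\{s(X_{n+j})\le t_{\gamma,n+j}(\ell)\}}{\ell\mathbf{1}\{s(X_{n+j})\le t_{\gamma,n+j}(\ell)\}+\sum_{i=1}^nL_i\mathbf{1}\{s(X_i)\le t_{\gamma,n+j}(\ell)\}},$$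 each ratio being $0$ when its numerator is $0$ and $+\infty$ when the numerator is positive and denominator $0$; and $E_{\gamma,n+j}=0$ if $\inf_{\ell}t_{\gamma,n+j}(\ell)=-\infty$. *)

theory Defs
  imports "HOL-Probability.Probability" "HOL-Combinatorics.Permutations"
begin

(* Deterministic ingredients. S i = s(X_i), Lc i = L_i (i = 1..n+m). *)

definition ind :: "bool \<Rightarrow> real" where
  "ind b = (if b then 1 else 0)"

definition FR :: "nat \<Rightarrow> nat \<Rightarrow> (nat \<Rightarrow> real) \<Rightarrow> (nat \<Rightarrow> real) \<Rightarrow> nat \<Rightarrow> real \<Rightarrow> real \<Rightarrow> real" where
  "FR n m S Lc j t l =
     (l * ind (S (n + j) \<le> t) + (\<Sum>i\<in>{1..n}. Lc i * ind (S i \<le> t)))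
     / (1 + real (card {k\<in>{1..m}. k \<noteq> j \<and> S (n + k) \<le> t}))
     * (real m / (real n + 1))"

definition Mscores :: "nat \<Rightarrow> nat \<Rightarrow> (nat \<Rightarrow> real) \<Rightarrow> real set" where
  "Mscores n m S = S ` {1..n+m}"

definition tgam :: "nat \<Rightarrow> nat \<Rightarrow> (nat \<Rightarrow> real) \<Rightarrow> (nat \<Rightarrow> real) \<Rightarrow> real \<Rightarrow> nat \<Rightarrow> real \<Rightarrow> ereal" where
  "tgam n m S Lc \<gamma> j l =
     (let A = {t\<in>Mscores n m S. FR n m S Lc j t l \<le> \<gamma>}
      in if A = {} then -\<infinity> else ereal (Max A))"

definition Eratio :: "nat \<Rightarrow> nat \<Rightarrow> (nat \<Rightarrow> real) \<Rightarrow> (nat \<Rightarrow> real) \<Rightarrow> real \<Rightarrow> nat \<Rightarrow> real \<Rightarrow> ereal" where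
  "Eratio n m S Lc \<gamma> j l =
     (let T = tgam n m S Lc \<gamma> j l;
          num = (real n + 1) * ind (ereal (S (n + j)) \<le> T);
          den = l * ind (ereal (S (n + j)) \<le> T)
                + (\<Sum>i\<in>{1..n}. Lc i * ind (ereal (S i) \<le> T))
      in if num = 0 then 0 else if den = 0 then \<infinity> else ereal (num / den))"

definition Egam :: "nat \<Rightarrow> nat \<Rightarrow> (nat \<Rightarrow> real) \<Rightarrow> (nat \<Rightarrow> real) \<Rightarrow> real \<Rightarrow> nat \<Rightarrow> ereal" where
  "Egam n m S Lc \<gamma> j =
     (if (INF l\<in>{0..1::real}. tgam n m S Lc \<gamma> j l) = -\<infinity> then 0
      else (INF l\<in>{0..1::real}. Eratio n m S Lc \<gamma> j l))"

definition exchangeable ::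
  "'a measure \<Rightarrow> 'x measure \<Rightarrow> 'y measure \<Rightarrow> nat \<Rightarrow> (nat \<Rightarrow> 'a \<Rightarrow> 'x) \<Rightarrow> (nat \<Rightarrow> 'a \<Rightarrow> 'y) \<Rightarrow> bool" where
  "exchangeable M MX MY N X Y =
     (\<forall>\<pi>. \<pi> permutes {1..N} \<longrightarrow>
        distr M (PiM {1..N} (\<lambda>_. MX \<Otimes>\<^sub>M MY)) (\<lambda>\<omega>. \<lambda>i\<in>{1..N}. (X (\<pi> i) \<omega>, Y (\<pi> i) \<omega>))
      = distr M (PiM {1..N} (\<lambda>_. MX \<Otimes>\<^sub>M MY)) (\<lambda>\<omega>. \<lambda>i\<in>{1..N}. (X i \<omega>, Y i \<omega>)))"

end

theory Submission
  imports Defs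
begin

(* Plugging the unobserved test loss L_{n+j} in for l gives an oracle threshold T that is a
   symmetric function of the n + 1 points indexed by {1..n} and n + j, and
   L_{n+j} E_{gamma,n+j} is at most the oracle weight
   (n + 1) L_{n+j} 1{s(X_{n+j}) <= T} / sum_i L_i 1{s(X_i) <= T}.
   By exchangeability all n + 1 points have the same expected oracle weight, and the weights
   sum to at most n + 1, so each of them has expectation at most 1. Neither gamma > 0 nor the
   range of s plays a role. *)

lemma ind_simps [simp]: "ind True = 1" "ind False = 0" "0 \<le> ind b"
  by (simp_all add: ind_def)

lemma borel_measurable_ind [measurable]: "Measurable.pred M P \<Longrightarrow> (\<lambda>x. ind (P x)) \<in> borel_measurable M"
  unfolding ind_def by measurable

definition calib_test_indices :: "nat \<Rightarrow> nat \<Rightarrow> nat set" where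
  "calib_test_indices n j = insert (n + j) {1..n}"

lemma finite_calib_test_indices [simp]: "finite (calib_test_indices n j)"
  by (simp add: calib_test_indices_def)

lemma calib_test_indices_subset: "j \<in> {1..m} \<Longrightarrow> calib_test_indices n j \<subseteq> {1..n+m}"
  by (auto simp: calib_test_indices_def)

lemma card_calib_test_indices: "1 \<le> j \<Longrightarrow> card (calib_test_indices n j) = n + 1"
  by (simp add: calib_test_indices_def)

lemma sum_calib_test_indices:
  "1 \<le> j \<Longrightarrow> (\<Sum>i\<in>calib_test_indices n j. f i) = f (n + j) + (\<Sum>i\<in>{1..n}. f i)"
  by (simp add: calib_test_indices_def)

lemma FR_at_test_loss:
  assumes "1 \<le> j"
  shows "FR n m S L j t (L (n + j)) =
    (\<Sum>i\<in>calib_test_indices n j. L i * ind (S i \<le> t))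
      / (1 + real (card {k\<in>{1..m}. k \<noteq> j \<and> S (n + k) \<le> t})) * (real m / (real n + 1))"
  by (simp add: FR_def sum_calib_test_indices[OF assms])

lemma FR_at_test_loss_permute:
  assumes perm: "\<pi> permutes calib_test_indices n j" and "1 \<le> j"
  shows "FR n m (S \<circ> \<pi>) (L \<circ> \<pi>) j t ((L \<circ> \<pi>) (n + j)) = FR n m S L j t (L (n + j))"
proof -
  have "(\<Sum>i\<in>calib_test_indices n j. L (\<pi> i) * ind (S (\<pi> i) \<le> t))
      = (\<Sum>i\<in>calib_test_indices n j. L i * ind (S i \<le> t))"
    using sum.permute[OF perm, of "\<lambda>i. L i * ind (S i \<le> t)"] by (simp add: comp_def)
  moreover have "\<pi> (n + k) = n + k" if "1 \<le> k" "k \<noteq> j" for k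
    using permutes_not_in[OF perm] that by (simp add: calib_test_indices_def)
  then have "{k\<in>{1..m}. k \<noteq> j \<and> S (\<pi> (n + k)) \<le> t} = {k\<in>{1..m}. k \<noteq> j \<and> S (n + k) \<le> t}"
    by auto
  ultimately show ?thesis
    using FR_at_test_loss[OF assms(2), of n m "S \<circ> \<pi>" "L \<circ> \<pi>" t]
      FR_at_test_loss[OF assms(2), of n m S L t] by simp
qed

lemma FR_cong:
  assumes "\<And>i. i \<in> {1..n+m} \<Longrightarrow> S i = S' i" "\<And>i. i \<in> {1..n} \<Longrightarrow> L i = L' i" "j \<in> {1..m}"
  shows "FR n m S L j t l = FR n m S' L' j t l"
proof -
  have "{k\<in>{1..m}. k \<noteq> j \<and> S (n + k) \<le> t} = {k\<in>{1..m}. k \<noteq> j \<and> S' (n + k) \<le> t}"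
    using assms(1) by auto
  then show ?thesis
    using assms by (simp add: FR_def)
qed

lemma ereal_le_tgam_iff:
  "ereal x \<le> tgam n m S L \<gamma> j l \<longleftrightarrow> (\<exists>i\<in>{1..n+m}. FR n m S L j (S i) l \<le> \<gamma> \<and> x \<le> S i)"
proof -
  define A where "A = {t\<in>Mscores n m S. FR n m S L j t l \<le> \<gamma>}"
  have "finite A"
    by (simp add: A_def Mscores_def)
  then have "ereal x \<le> tgam n m S L \<gamma> j l \<longleftrightarrow> (\<exists>t\<in>A. x \<le> t)"
    by (auto simp: tgam_def A_def[symmetric] Max_ge_iff)
  then show ?thesis
    by (auto simp: A_def Mscores_def)
qed

lemma tgam_cong:
  assumes "\<And>i. i \<in> {1..n+m} \<Longrightarrow> S i = S' i" "\<And>i. i \<in> {1..n} \<Longrightarrow> L i = L' i" "j \<in> {1..m}"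
  shows "tgam n m S L \<gamma> j l = tgam n m S' L' \<gamma> j l"
proof -
  have "Mscores n m S = Mscores n m S'"
    using assms(1) by (simp add: Mscores_def)
  then show ?thesis
    using FR_cong[OF assms] by (simp add: tgam_def)
qed

lemma tgam_at_test_loss_permute:
  assumes perm: "\<pi> permutes calib_test_indices n j" and j: "j \<in> {1..m}"
  shows "tgam n m (S \<circ> \<pi>) (L \<circ> \<pi>) \<gamma> j ((L \<circ> \<pi>) (n + j)) = tgam n m S L \<gamma> j (L (n + j))"
proof -
  have "\<pi> permutes {1..n+m}"
    using perm calib_test_indices_subset[OF j] by (rule permutes_subset)
  then have "Mscores n m (S \<circ> \<pi>) = Mscores n m S"
    unfolding Mscores_def image_comp[symmetric] by (simp add: permutes_image)
  then show ?thesis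
    using FR_at_test_loss_permute[OF perm] j by (simp add: tgam_def)
qed

definition oracle_selected :: "nat \<Rightarrow> nat \<Rightarrow> (nat \<Rightarrow> real) \<Rightarrow> (nat \<Rightarrow> real) \<Rightarrow> real \<Rightarrow> nat \<Rightarrow> nat \<Rightarrow> bool" where
  "oracle_selected n m S L \<gamma> j k \<longleftrightarrow> ereal (S k) \<le> tgam n m S L \<gamma> j (L (n + j))"

definition oracle_weight :: "nat \<Rightarrow> nat \<Rightarrow> (nat \<Rightarrow> real) \<Rightarrow> (nat \<Rightarrow> real) \<Rightarrow> real \<Rightarrow> nat \<Rightarrow> nat \<Rightarrow> real" where
  "oracle_weight n m S L \<gamma> j k =
     (real n + 1) * L k * ind (oracle_selected n m S L \<gamma> j k)
       / (\<Sum>i\<in>calib_test_indices n j. L i * ind (oracle_selected n m S L \<gamma> j i))"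

lemma oracle_weight_nonneg:
  assumes "\<And>i. i \<in> calib_test_indices n j \<Longrightarrow> 0 \<le> L i" "k \<in> calib_test_indices n j"
  shows "0 \<le> oracle_weight n m S L \<gamma> j k"
  using assms unfolding oracle_weight_def
  by (intro divide_nonneg_nonneg mult_nonneg_nonneg sum_nonneg) auto

lemma sum_oracle_weight_le: "(\<Sum>k\<in>calib_test_indices n j. oracle_weight n m S L \<gamma> j k) \<le> real n + 1"
proof -
  define D where "D = (\<Sum>i\<in>calib_test_indices n j. L i * ind (oracle_selected n m S L \<gamma> j i))"
  have "(\<Sum>k\<in>calib_test_indices n j. oracle_weight n m S L \<gamma> j k) = (real n + 1) * (D / D)"
    by (simp add: oracle_weight_def D_def sum_divide_distrib[symmetric] sum_distrib_left[symmetric] mult.assoc)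
  also have "\<dots> \<le> real n + 1"
    by (cases "D = 0") simp_all
  finally show ?thesis .
qed

lemma oracle_weight_cong:
  assumes "\<And>i. i \<in> {1..n+m} \<Longrightarrow> S i = S' i" "\<And>i. i \<in> {1..n+m} \<Longrightarrow> L i = L' i"
    and j: "j \<in> {1..m}" and "k \<in> {1..n+m}"
  shows "oracle_weight n m S L \<gamma> j k = oracle_weight n m S' L' \<gamma> j k"
proof -
  have "tgam n m S L \<gamma> j l = tgam n m S' L' \<gamma> j l" for l
    using assms(1,2) j by (intro tgam_cong) auto
  moreover have "L (n + j) = L' (n + j)"
    using assms(2) j by simp
  ultimately have sel: "oracle_selected n m S L \<gamma> j i = oracle_selected n m S' L' \<gamma> j i"
    if "i \<in> {1..n+m}" for i
    using assms(1) that by (simp add: oracle_selected_def)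
  have "i \<in> {1..n+m}" if "i \<in> calib_test_indices n j" for i
    using calib_test_indices_subset[OF j] that by blast
  with assms(2,4) sel show ?thesis
    unfolding oracle_weight_def by (intro arg_cong2[where f = "(/)"] sum.cong) simp_all
qed

lemma oracle_weight_permute:
  assumes perm: "\<pi> permutes calib_test_indices n j" and j: "j \<in> {1..m}"
  shows "oracle_weight n m (S \<circ> \<pi>) (L \<circ> \<pi>) \<gamma> j k = oracle_weight n m S L \<gamma> j (\<pi> k)"
proof -
  have sel: "oracle_selected n m (S \<circ> \<pi>) (L \<circ> \<pi>) \<gamma> j i = oracle_selected n m S L \<gamma> j (\<pi> i)" for i
    using tgam_at_test_loss_permute[OF perm j] by (simp add: oracle_selected_def)
  have "(\<Sum>i\<in>calib_test_indices n j. L (\<pi> i) * ind (oracle_selected n m S L \<gamma> j (\<pi> i)))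
      = (\<Sum>i\<in>calib_test_indices n j. L i * ind (oracle_selected n m S L \<gamma> j i))"
    using sum.permute[OF perm, of "\<lambda>i. L i * ind (oracle_selected n m S L \<gamma> j i)"] by (simp add: comp_def)
  then show ?thesis
    by (simp add: oracle_weight_def sel)
qed

lemma Eratio_nonneg:
  assumes "\<And>i. i \<in> {1..n} \<Longrightarrow> 0 \<le> L i" "0 \<le> l"
  shows "0 \<le> Eratio n m S L \<gamma> j l"
proof -
  have "0 \<le> (\<Sum>i\<in>{1..n}. L i * ind (ereal (S i) \<le> T))" for T
    using assms(1) by (intro sum_nonneg mult_nonneg_nonneg) auto
  then show ?thesis
    using assms(2) by (auto simp: Eratio_def Let_def intro!: divide_nonneg_nonneg)
qed

lemma Egam_nonneg: "(\<And>i. i \<in> {1..n} \<Longrightarrow> 0 \<le> L i) \<Longrightarrow> 0 \<le> Egam n m S L \<gamma> j"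
  unfolding Egam_def using Eratio_nonneg by (auto intro!: INF_greatest)

lemma test_loss_mult_Eratio_le_oracle_weight:
  assumes L: "\<And>i. i \<in> calib_test_indices n j \<Longrightarrow> 0 \<le> L i" and "1 \<le> j"
  shows "ereal (L (n + j)) * Eratio n m S L \<gamma> j (L (n + j)) \<le> ereal (oracle_weight n m S L \<gamma> j (n + j))"
proof -
  let ?sel = "oracle_selected n m S L \<gamma> j"
  define D where "D = (\<Sum>i\<in>calib_test_indices n j. L i * ind (?sel i))"
  have nj: "n + j \<in> calib_test_indices n j"
    by (simp add: calib_test_indices_def)
  have Eratio: "Eratio n m S L \<gamma> j (L (n + j)) =
      (if (real n + 1) * ind (?sel (n + j)) = 0 then 0 else if D = 0 then \<infinity>
       else ereal ((real n + 1) * ind (?sel (n + j)) / D))"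
    using assms(2) by (simp add: Eratio_def Let_def oracle_selected_def D_def sum_calib_test_indices)
  have w: "oracle_weight n m S L \<gamma> j (n + j) = (real n + 1) * L (n + j) * ind (?sel (n + j)) / D"
    by (simp add: oracle_weight_def D_def)
  have "L (n + j) * ind (?sel (n + j)) \<le> D"
    unfolding D_def using L nj by (intro member_le_sum) auto
  \<comment> \<open>so a vanishing denominator forces \<open>L (n + j) = 0\<close>, and \<open>0 * \<infinity> = 0\<close> in \<open>ereal\<close>\<close>
  then have "L (n + j) = 0" if "D = 0" "?sel (n + j)"
    using L[OF nj] that by simp
  moreover have "0 \<le> oracle_weight n m S L \<gamma> j (n + j)"
    using L nj by (rule oracle_weight_nonneg)
  ultimately show ?thesis
    unfolding Eratio w
    by (cases "?sel (n + j)"; cases "D = 0") (simp_all add: mult.commute)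
qed

lemma test_loss_mult_Egam_le_oracle_weight:
  assumes L: "\<And>i. i \<in> calib_test_indices n j \<Longrightarrow> 0 \<le> L i" and "L (n + j) \<le> 1" "1 \<le> j"
  shows "ereal (L (n + j)) * Egam n m S L \<gamma> j \<le> ereal (oracle_weight n m S L \<gamma> j (n + j))"
proof -
  have nj: "n + j \<in> calib_test_indices n j"
    by (simp add: calib_test_indices_def)
  then have l: "L (n + j) \<in> {0..1}"
    using L assms(2) by simp
  show ?thesis
  proof (cases "(INF l\<in>{0..1}. tgam n m S L \<gamma> j l) = -\<infinity>")
    case True
    then show ?thesis
      using oracle_weight_nonneg[OF L nj] by (simp add: Egam_def)
  next
    case False
    then have "Egam n m S L \<gamma> j \<le> Eratio n m S L \<gamma> j (L (n + j))"
      using l by (simp add: Egam_def INF_lower)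
    then have "ereal (L (n + j)) * Egam n m S L \<gamma> j \<le> ereal (L (n + j)) * Eratio n m S L \<gamma> j (L (n + j))"
      by (rule ereal_mult_left_mono) (use l in simp)
    also have "\<dots> \<le> ereal (oracle_weight n m S L \<gamma> j (n + j))"
      using L assms(3) by (rule test_loss_mult_Eratio_le_oracle_weight)
    finally show ?thesis .
  qed
qed

lemma borel_measurable_FR:
  assumes "\<And>i. i \<in> {1..n+m} \<Longrightarrow> S i \<in> borel_measurable M"
    and "\<And>i. i \<in> {1..n} \<Longrightarrow> L i \<in> borel_measurable M"
    and "j \<in> {1..m}"
    and [measurable]: "t \<in> borel_measurable M" "l \<in> borel_measurable M"
  shows "(\<lambda>x. FR n m (\<lambda>i. S i x) (\<lambda>i. L i x) j (t x) (l x)) \<in> borel_measurable M"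
proof -
  have [measurable]: "S (n + k) \<in> borel_measurable M" if "k \<in> {1..m}" for k
    using assms(1) that by simp
  have "(\<lambda>x. \<Sum>i\<in>{1..n}. L i x * ind (S i x \<le> t x)) \<in> borel_measurable M"
  proof (rule borel_measurable_sum)
    fix i assume "i \<in> {1..n}"
    with assms(1,2) have [measurable]: "S i \<in> borel_measurable M" "L i \<in> borel_measurable M"
      by simp_all
    show "(\<lambda>x. L i x * ind (S i x \<le> t x)) \<in> borel_measurable M"
      by measurable
  qed
  moreover have "(\<lambda>x. real (card {k \<in> {1..m}. k \<noteq> j \<and> S (n + k) x \<le> t x})) \<in> borel_measurable M"
    by measurable
  ultimately show ?thesis
    using assms(3) unfolding FR_def by measurable
qed

lemma pred_oracle_selected:
  assumes S: "\<And>i. i \<in> {1..n+m} \<Longrightarrow> S i \<in> borel_measurable M"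
    and L: "\<And>i. i \<in> {1..n+m} \<Longrightarrow> L i \<in> borel_measurable M"
    and j: "j \<in> {1..m}" and k: "k \<in> {1..n+m}"
  shows "Measurable.pred M (\<lambda>x. oracle_selected n m (\<lambda>i. S i x) (\<lambda>i. L i x) \<gamma> j k)"
  unfolding oracle_selected_def ereal_le_tgam_iff
proof (intro pred_intros_finite(4) finite_atLeastAtMost)
  fix i assume "i \<in> {1..n+m}"
  with S L j k have [measurable]: "S i \<in> borel_measurable M" "S k \<in> borel_measurable M"
    "L (n + j) \<in> borel_measurable M" by simp_all
  have [measurable]: "(\<lambda>x. FR n m (\<lambda>i. S i x) (\<lambda>i. L i x) j (S i x) (L (n + j) x)) \<in> borel_measurable M"
    using S L j by (intro borel_measurable_FR) simp_all
  show "Measurable.pred M (\<lambda>x. FR n m (\<lambda>i. S i x) (\<lambda>i. L i x) j (S i x) (L (n + j) x) \<le> \<gamma> \<and> S k x \<le> S i x)"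
    by measurable
qed

lemma borel_measurable_oracle_weight:
  assumes S: "\<And>i. i \<in> {1..n+m} \<Longrightarrow> S i \<in> borel_measurable M"
    and L: "\<And>i. i \<in> {1..n+m} \<Longrightarrow> L i \<in> borel_measurable M"
    and j: "j \<in> {1..m}" and k: "k \<in> {1..n+m}"
  shows "(\<lambda>x. oracle_weight n m (\<lambda>i. S i x) (\<lambda>i. L i x) \<gamma> j k) \<in> borel_measurable M"
proof -
  have [measurable]: "Measurable.pred M (\<lambda>x. oracle_selected n m (\<lambda>i. S i x) (\<lambda>i. L i x) \<gamma> j i)"
    if "i \<in> {1..n+m}" for i
    using S L j that by (rule pred_oracle_selected)
  have [measurable]: "L i \<in> borel_measurable M" if "i \<in> {1..n+m}" for i
    using L that .
  have "(\<lambda>x. \<Sum>i\<in>calib_test_indices n j. L i x * ind (oracle_selected n m (\<lambda>i. S i x) (\<lambda>i. L i x) \<gamma> j i))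
      \<in> borel_measurable M"
  proof (rule borel_measurable_sum)
    fix i assume "i \<in> calib_test_indices n j"
    with calib_test_indices_subset[OF j] have "i \<in> {1..n+m}"
      by blast
    then show "(\<lambda>x. L i x * ind (oracle_selected n m (\<lambda>i. S i x) (\<lambda>i. L i x) \<gamma> j i)) \<in> borel_measurable M"
      by measurable
  qed
  then show ?thesis
    unfolding oracle_weight_def using k by measurable
qed

definition sample :: "nat \<Rightarrow> (nat \<Rightarrow> 'a \<Rightarrow> 'x) \<Rightarrow> (nat \<Rightarrow> 'a \<Rightarrow> 'y) \<Rightarrow> 'a \<Rightarrow> nat \<Rightarrow> 'x \<times> 'y" where
  "sample N X Y \<omega> = (\<lambda>i\<in>{1..N}. (X i \<omega>, Y i \<omega>))"

lemma measurable_sample: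
  assumes "\<And>i. i \<in> {1..N} \<Longrightarrow> X i \<in> measurable M MX" "\<And>i. i \<in> {1..N} \<Longrightarrow> Y i \<in> measurable M MY"
  shows "sample N X Y \<in> measurable M (PiM {1..N} (\<lambda>_. MX \<Otimes>\<^sub>M MY))"
  unfolding sample_def using assms by (intro measurable_restrict measurable_Pair) simp_all

lemma sample_comp_permutes:
  assumes "\<pi> permutes {1..N}"
  shows "sample N X Y \<omega> \<circ> \<pi> = sample N (\<lambda>i. X (\<pi> i)) (\<lambda>i. Y (\<pi> i)) \<omega>"
proof
  fix i
  show "(sample N X Y \<omega> \<circ> \<pi>) i = sample N (\<lambda>i. X (\<pi> i)) (\<lambda>i. Y (\<pi> i)) \<omega> i"
    using permutes_in_image[OF assms, of i] permutes_not_in[OF assms, of i]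
    by (cases "i \<in> {1..N}") (auto simp: sample_def)
qed

lemma nn_integral_exchangeable_permute:
  assumes exch: "exchangeable M MX MY N X Y" and perm: "\<pi> permutes {1..N}"
    and X: "\<And>i. i \<in> {1..N} \<Longrightarrow> X i \<in> measurable M MX"
    and Y: "\<And>i. i \<in> {1..N} \<Longrightarrow> Y i \<in> measurable M MY"
    and g: "g \<in> borel_measurable (PiM {1..N} (\<lambda>_. MX \<Otimes>\<^sub>M MY))"
  shows "(\<integral>\<^sup>+\<omega>. g (sample N X Y \<omega> \<circ> \<pi>) \<partial>M) = (\<integral>\<^sup>+\<omega>. g (sample N X Y \<omega>) \<partial>M)"
proof -
  let ?P = "PiM {1..N} (\<lambda>_. MX \<Otimes>\<^sub>M MY)"
  have Z: "sample N X Y \<in> measurable M ?P"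
    using X Y by (rule measurable_sample)
  have "sample N (\<lambda>i. X (\<pi> i)) (\<lambda>i. Y (\<pi> i)) \<in> measurable M ?P"
    using X Y permutes_in_image[OF perm] by (intro measurable_sample) simp_all
  then have "(\<integral>\<^sup>+\<omega>. g (sample N X Y \<omega> \<circ> \<pi>) \<partial>M)
      = integral\<^sup>N (distr M ?P (sample N (\<lambda>i. X (\<pi> i)) (\<lambda>i. Y (\<pi> i)))) g"
    using g by (simp add: sample_comp_permutes[OF perm] nn_integral_distr)
  also have "distr M ?P (sample N (\<lambda>i. X (\<pi> i)) (\<lambda>i. Y (\<pi> i))) = distr M ?P (sample N X Y)"
    using exch perm by (simp add: exchangeable_def sample_def[abs_def])
  also have "integral\<^sup>N (distr M ?P (sample N X Y)) g = (\<integral>\<^sup>+\<omega>. g (sample N X Y \<omega>) \<partial>M)"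
    using Z g by (simp add: nn_integral_distr)
  finally show ?thesis .
qed

lemma nn_integral_exchangeable_equivariant_le_one:
  assumes "prob_space M" and exch: "exchangeable M MX MY N X Y"
    and X: "\<And>i. i \<in> {1..N} \<Longrightarrow> X i \<in> measurable M MX"
    and Y: "\<And>i. i \<in> {1..N} \<Longrightarrow> Y i \<in> measurable M MY"
    and I: "I \<subseteq> {1..N}" "k\<^sub>0 \<in> I"
    and g: "\<And>k. k \<in> I \<Longrightarrow> g k \<in> borel_measurable (PiM {1..N} (\<lambda>_. MX \<Otimes>\<^sub>M MY))"
    and equivariant: "\<And>\<pi> k z. \<pi> permutes I \<Longrightarrow> k \<in> I \<Longrightarrow> g k (z \<circ> \<pi>) = g (\<pi> k) z"
    and sum_le: "\<And>z. z \<in> space (PiM {1..N} (\<lambda>_. MX \<Otimes>\<^sub>M MY)) \<Longrightarrow> (\<Sum>k\<in>I. g k z) \<le> of_nat (card I)"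
  shows "(\<integral>\<^sup>+\<omega>. g k\<^sub>0 (sample N X Y \<omega>) \<partial>M) \<le> 1"
proof -
  interpret prob_space M by fact
  have Z: "sample N X Y \<in> measurable M (PiM {1..N} (\<lambda>_. MX \<Otimes>\<^sub>M MY))"
    using X Y by (rule measurable_sample)
  have fin: "finite I"
    using I(1) finite_subset by blast
  have same: "(\<integral>\<^sup>+\<omega>. g k (sample N X Y \<omega>) \<partial>M) = (\<integral>\<^sup>+\<omega>. g k\<^sub>0 (sample N X Y \<omega>) \<partial>M)" if k: "k \<in> I" for k
  proof -
    have swap: "Transposition.transpose k k\<^sub>0 permutes I"
      using k I(2) by (rule permutes_swap_id)
    have "(\<integral>\<^sup>+\<omega>. g k\<^sub>0 (sample N X Y \<omega> \<circ> Transposition.transpose k k\<^sub>0) \<partial>M) = (\<integral>\<^sup>+\<omega>. g k\<^sub>0 (sample N X Y \<omega>) \<partial>M)"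
      using exch permutes_subset[OF swap I(1)] X Y g[OF I(2)] by (rule nn_integral_exchangeable_permute)
    then show ?thesis
      using equivariant[OF swap I(2)] by simp
  qed
  have "of_nat (card I) * (\<integral>\<^sup>+\<omega>. g k\<^sub>0 (sample N X Y \<omega>) \<partial>M) = (\<Sum>k\<in>I. \<integral>\<^sup>+\<omega>. g k (sample N X Y \<omega>) \<partial>M)"
    using same by simp
  also have "\<dots> = (\<integral>\<^sup>+\<omega>. (\<Sum>k\<in>I. g k (sample N X Y \<omega>)) \<partial>M)"
    using measurable_compose[OF Z g] by (intro nn_integral_sum[symmetric]) auto
  also have "\<dots> \<le> (\<integral>\<^sup>+\<omega>. of_nat (card I) \<partial>M)"
    using sum_le measurable_space[OF Z] by (intro nn_integral_mono) auto
  also have "\<dots> = of_nat (card I) * 1"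
    by (simp add: emeasure_space_1)
  finally show ?thesis
    using fin I(2) by (subst (asm) ennreal_mult_le_mult_iff) (auto simp: card_gt_0_iff)
qed

lemma nn_integral_oracle_weight_le_one:
  assumes "prob_space M" and exch: "exchangeable M MX MY (n + m) X Y"
    and X: "\<And>i. i \<in> {1..n+m} \<Longrightarrow> X i \<in> measurable M MX"
    and Y: "\<And>i. i \<in> {1..n+m} \<Longrightarrow> Y i \<in> measurable M MY"
    and score_measurable: "score \<in> borel_measurable (MX \<Otimes>\<^sub>M MY)"
    and loss_measurable: "loss \<in> borel_measurable (MX \<Otimes>\<^sub>M MY)"
    and loss_nonneg: "\<And>z. z \<in> space (MX \<Otimes>\<^sub>M MY) \<Longrightarrow> 0 \<le> loss z"
    and j: "j \<in> {1..m}"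
  shows "(\<integral>\<^sup>+\<omega>. ennreal (oracle_weight n m (\<lambda>i. score (X i \<omega>, Y i \<omega>))
            (\<lambda>i. loss (X i \<omega>, Y i \<omega>)) \<gamma> j (n + j)) \<partial>M) \<le> 1"
proof -
  let ?P = "PiM {1..n+m} (\<lambda>_. MX \<Otimes>\<^sub>M MY)"
  define g where "g k z = ennreal (oracle_weight n m (\<lambda>i. score (z i)) (\<lambda>i. loss (z i)) \<gamma> j k)" for k z
  note C = calib_test_indices_subset[OF j]
  have "(\<integral>\<^sup>+\<omega>. g (n + j) (sample (n + m) X Y \<omega>) \<partial>M) \<le> 1"
  proof (rule nn_integral_exchangeable_equivariant_le_one[OF assms(1) exch X Y C])
    show "n + j \<in> calib_test_indices n j"
      by (simp add: calib_test_indices_def)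
  next
    fix k assume "k \<in> calib_test_indices n j"
    with C have k: "k \<in> {1..n+m}"
      by blast
    have [measurable]: "(\<lambda>z. z i) \<in> measurable ?P (MX \<Otimes>\<^sub>M MY)" if "i \<in> {1..n+m}" for i
      using that by (rule measurable_component_singleton)
    have "(\<lambda>z. oracle_weight n m (\<lambda>i. score (z i)) (\<lambda>i. loss (z i)) \<gamma> j k) \<in> borel_measurable ?P"
      using j k by (intro borel_measurable_oracle_weight) (use score_measurable loss_measurable in measurable)
    then show "g k \<in> borel_measurable ?P"
      unfolding g_def[abs_def] by measurable
  next
    fix \<pi> k z assume "\<pi> permutes calib_test_indices n j"
    from oracle_weight_permute[OF this j, of "\<lambda>i. score (z i)" "\<lambda>i. loss (z i)"]
    show "g k (z \<circ> \<pi>) = g (\<pi> k) z"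
      by (simp add: g_def comp_def)
  next
    fix z assume "z \<in> space ?P"
    then have "z i \<in> space (MX \<Otimes>\<^sub>M MY)" if "i \<in> {1..n+m}" for i
      using that by (auto simp: space_PiM)
    then have "0 \<le> loss (z i)" if "i \<in> calib_test_indices n j" for i
      using C that loss_nonneg by blast
    then have "(\<Sum>k\<in>calib_test_indices n j. g k z)
        = ennreal (\<Sum>k\<in>calib_test_indices n j. oracle_weight n m (\<lambda>i. score (z i)) (\<lambda>i. loss (z i)) \<gamma> j k)"
      unfolding g_def by (intro sum_ennreal) (auto intro: oracle_weight_nonneg)
    also have "\<dots> \<le> ennreal (real n + 1)"
      by (intro ennreal_leI sum_oracle_weight_le)
    also have "\<dots> = of_nat (card (calib_test_indices n j))"
      using j by (simp add: card_calib_test_indices ennreal_of_nat_eq_real_of_nat)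
    finally show "(\<Sum>k\<in>calib_test_indices n j. g k z) \<le> of_nat (card (calib_test_indices n j))" .
  qed
  moreover have "g (n + j) (sample (n + m) X Y \<omega>) = ennreal (oracle_weight n m (\<lambda>i. score (X i \<omega>, Y i \<omega>))
      (\<lambda>i. loss (X i \<omega>, Y i \<omega>)) \<gamma> j (n + j))" for \<omega>
    unfolding g_def using j by (intro arg_cong[where f = ennreal] oracle_weight_cong) (auto simp: sample_def)
  ultimately show ?thesis
    by simp
qed

theorem theorem5p1:
  fixes M :: "'a measure" and MX :: "'x measure" and MY :: "'y measure"
    and X :: "nat \<Rightarrow> 'a \<Rightarrow> 'x" and Y :: "nat \<Rightarrow> 'a \<Rightarrow> 'y"
    and f :: "'f" and risk :: "'f \<Rightarrow> 'x \<Rightarrow> 'y \<Rightarrow> real"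
    and s :: "'x \<Rightarrow> real" and n m j :: nat and \<gamma> :: real
  assumes "prob_space M"
    and "\<And>i. i \<in> {1..n+m} \<Longrightarrow> X i \<in> measurable M MX"
    and "\<And>i. i \<in> {1..n+m} \<Longrightarrow> Y i \<in> measurable M MY"
    and "exchangeable M MX MY (n + m) X Y"
    and "(\<lambda>(x, y). risk f x y) \<in> borel_measurable (MX \<Otimes>\<^sub>M MY)"
    and "\<And>x y. x \<in> space MX \<Longrightarrow> y \<in> space MY \<Longrightarrow> risk f x y \<in> {0..1}"
    and "s \<in> borel_measurable MX"
    and "\<And>x. x \<in> space MX \<Longrightarrow> s x \<in> {0..1}"
    and "\<gamma> > 0"
    and "j \<in> {1..m}"
  shows "(\<forall>\<omega>\<in>space M.
            Egam n m (\<lambda>i. s (X i \<omega>)) (\<lambda>i. risk f (X i \<omega>) (Y i \<omega>)) \<gamma> j \<ge> 0)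
       \<and> (\<integral>\<^sup>+ \<omega>. e2ennreal (ereal (risk f (X (n + j) \<omega>) (Y (n + j) \<omega>))
                  * Egam n m (\<lambda>i. s (X i \<omega>)) (\<lambda>i. risk f (X i \<omega>) (Y i \<omega>)) \<gamma> j) \<partial>M) \<le> 1"
proof -
  let ?S = "\<lambda>\<omega> i. s (X i \<omega>)" and ?L = "\<lambda>\<omega> i. risk f (X i \<omega>) (Y i \<omega>)"
  let ?w = "\<lambda>\<omega>. oracle_weight n m (?S \<omega>) (?L \<omega>) \<gamma> j (n + j)"
  have loss_01: "?L \<omega> i \<in> {0..1}" if "\<omega> \<in> space M" "i \<in> {1..n+m}" for \<omega> i
    using assms(6) measurable_space[OF assms(2)] measurable_space[OF assms(3)] that by blast
  have score: "(\<lambda>(x, y). s x) \<in> borel_measurable (MX \<Otimes>\<^sub>M MY)"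
    using assms(7) by measurable
  have loss_nonneg: "0 \<le> (\<lambda>(x, y). risk f x y) z" if "z \<in> space (MX \<Otimes>\<^sub>M MY)" for z
    using assms(6) that by (auto simp: space_pair_measure)
  have "(\<integral>\<^sup>+\<omega>. ennreal (?w \<omega>) \<partial>M) \<le> 1"
    using nn_integral_oracle_weight_le_one[OF assms(1,4,2,3) score assms(5) loss_nonneg assms(10)] by simp
  moreover have "(\<integral>\<^sup>+\<omega>. e2ennreal (ereal (?L \<omega> (n + j)) * Egam n m (?S \<omega>) (?L \<omega>) \<gamma> j) \<partial>M)
      \<le> (\<integral>\<^sup>+\<omega>. ennreal (?w \<omega>) \<partial>M)"
  proof (rule nn_integral_mono)
    fix \<omega> assume "\<omega> \<in> space M"
    have "ereal (?L \<omega> (n + j)) * Egam n m (?S \<omega>) (?L \<omega>) \<gamma> j \<le> ereal (?w \<omega>)"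
      using loss_01[OF \<open>\<omega> \<in> space M\<close>] calib_test_indices_subset[OF assms(10), of n] assms(10)
      by (intro test_loss_mult_Egam_le_oracle_weight) auto
    then show "e2ennreal (ereal (?L \<omega> (n + j)) * Egam n m (?S \<omega>) (?L \<omega>) \<gamma> j) \<le> ennreal (?w \<omega>)"
      by (metis e2ennreal_mono e2ennreal_ereal)
  qed
  moreover have "\<forall>\<omega>\<in>space M. 0 \<le> Egam n m (?S \<omega>) (?L \<omega>) \<gamma> j"
    using loss_01 by (auto intro!: Egam_nonneg)
  ultimately show ?thesis
    by (meson order_trans)
qed

end
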